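(* There is a geodesic coarse median space $(X,d,\mu)$ of rank $2$ such that for every $C\geqslant0$ there exist $a,b\in X$ with the property that no geodesic connecting $a$ and $b$ lies within Hausdorff distance $C$ of the interval $[a,b]$.
   Context: Write $x\sim_s y$ if $d(x,y)\leqslant s$. A coarse median space is a triple $(X,d,\mu)$ with $(X,d)$ a metric space and $\mu\colon X^3\to X$ satisfying: (M1) $\mu(a,a,b)=a$; (M2) $\mu(a_1,a_2,a_3)$ is invariant under permutations of its arguments; (C1) there is an affine $\rho(t)=Kt+H_0$ with $d(\mu(a,b,c),\mu(a',b',c'))\leqslant\rho(d(a,a')+d(b,b')+d(c,c'))$ for all points; (C2) there is $H\colon\mathbb N\to[0,\infty)$ such that for every finite $A\subseteq X$ with $1\leqslant|A|\leqslant p$ there are a finite median algebra $(\Pi,\mu_\Pi)$ and maps $\pi\colon A\to\Pi$, $\lambda\colon\Pi\to X$ with $\lambda\mu_\Pi(x,y,z)\sim_{H(p)}\mu(\lambda x,\lambda y,\lambda z)$ for all $x,y,z\in\Pi$ and $\lambda\pi a\sim_{H(p)}a$ for all $a\in A$. (A median algebra is a set with a ternary operation $m$ satisfying $m(a,a,b)=a$, full symmetry, and $m(m(a,b,c),b,d)=m(a,b,m(c,b,d))$.) The rank of a median algebra is the supremum of $k$ such that it contains a subalgebra isomorphic to $I^k=(\mathbb Z_2)^k$ with coordinatewise majority vote as median. The coarse median space has rank at most $n$ if there exist $\rho,H$ as in (C1),(C2) for which $\Pi$ in (C2) can always be chosen of rank at most $n$; its rank is the least such $n$. The interval is $[a,b]=\{\mu(a,y,b):y\in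 X\}$. *)

theory Defs
  imports Complex_Main
begin

definition metric_on :: "'a set \<Rightarrow> ('a \<Rightarrow> 'a \<Rightarrow> real) \<Rightarrow> bool" where
  "metric_on X d \<longleftrightarrow>
     (\<forall>x\<in>X. \<forall>y\<in>X. 0 \<le> d x y \<and> (d x y = 0 \<longleftrightarrow> x = y) \<and> d x y = d y x) \<and>
     (\<forall>x\<in>X. \<forall>y\<in>X. \<forall>z\<in>X. d x z \<le> d x y + d y z)"

definition geodesic_path :: "'a set \<Rightarrow> ('a \<Rightarrow> 'a \<Rightarrow> real) \<Rightarrow> (real \<Rightarrow> 'a) \<Rightarrow> 'a \<Rightarrow> 'a \<Rightarrow> bool" where
  "geodesic_path X d \<gamma> a b \<longleftrightarrow>
     \<gamma> 0 = a \<and> \<gamma> (d a b) = b \<and> \<gamma> ` {0..d a b} \<subseteq> X \<and>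
     (\<forall>s\<in>{0..d a b}. \<forall>t\<in>{0..d a b}. d (\<gamma> s) (\<gamma> t) = \<bar>s - t\<bar>)"

definition geodesic_space :: "'a set \<Rightarrow> ('a \<Rightarrow> 'a \<Rightarrow> real) \<Rightarrow> bool" where
  "geodesic_space X d \<longleftrightarrow> metric_on X d \<and>
     (\<forall>a\<in>X. \<forall>b\<in>X. \<exists>\<gamma>. geodesic_path X d \<gamma> a b)"

text \<open>Hausdorff distance between S and T is at most C
  (i.e. the infimum-based Hausdorff distance is \<le> C).\<close>
definition hausdorff_le :: "('a \<Rightarrow> 'a \<Rightarrow> real) \<Rightarrow> 'a set \<Rightarrow> 'a set \<Rightarrow> real \<Rightarrow> bool" where
  "hausdorff_le d S T C \<longleftrightarrow>
     (\<forall>s\<in>S. \<forall>\<epsilon>>0. \<exists>t\<in>T. d s t < C + \<epsilon>) \<and>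
     (\<forall>t\<in>T. \<forall>\<epsilon>>0. \<exists>s\<in>S. d s t < C + \<epsilon>)"

definition median_algebra :: "'b set \<Rightarrow> ('b \<Rightarrow> 'b \<Rightarrow> 'b \<Rightarrow> 'b) \<Rightarrow> bool" where
  "median_algebra P m \<longleftrightarrow>
     (\<forall>a\<in>P. \<forall>b\<in>P. \<forall>c\<in>P. m a b c \<in> P) \<and>
     (\<forall>a\<in>P. \<forall>b\<in>P. m a a b = a) \<and>
     (\<forall>a\<in>P. \<forall>b\<in>P. \<forall>c\<in>P. m a b c = m b a c \<and> m a b c = m a c b) \<and>
     (\<forall>a\<in>P. \<forall>b\<in>P. \<forall>c\<in>P. \<forall>e\<in>P. m (m a b c) b e = m a b (m c b e))"

text \<open>The median cube I^k: Boolean functions on {0..<k} (extensional),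
  with coordinatewise majority vote.\<close>
definition cube :: "nat \<Rightarrow> (nat \<Rightarrow> bool) set" where
  "cube k = {f. \<forall>i. i \<ge> k \<longrightarrow> f i = False}"

definition majority :: "(nat \<Rightarrow> bool) \<Rightarrow> (nat \<Rightarrow> bool) \<Rightarrow> (nat \<Rightarrow> bool) \<Rightarrow> (nat \<Rightarrow> bool)" where
  "majority x y z = (\<lambda>i. (x i \<and> y i) \<or> (y i \<and> z i) \<or> (x i \<and> z i))"

definition contains_cube :: "'b set \<Rightarrow> ('b \<Rightarrow> 'b \<Rightarrow> 'b \<Rightarrow> 'b) \<Rightarrow> nat \<Rightarrow> bool" where
  "contains_cube P m k \<longleftrightarrow>
     (\<exists>f. inj_on f (cube k) \<and> f ` cube k \<subseteq> P \<and>
        (\<forall>x\<in>cube k. \<forall>y\<in>cube k. \<forall>z\<in>cube k. f (majority x y z) = m (f x) (f y) (f z)))"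

definition median_rank_le :: "'b set \<Rightarrow> ('b \<Rightarrow> 'b \<Rightarrow> 'b \<Rightarrow> 'b) \<Rightarrow> nat \<Rightarrow> bool" where
  "median_rank_le P m n \<longleftrightarrow> (\<forall>k. contains_cube P m k \<longrightarrow> k \<le> n)"

text \<open>Coarse median space of rank at most n. Finite median algebras are
  taken on carriers in nat (every finite median algebra is isomorphic to one).\<close>
definition coarse_median_rank_le ::
  "'a set \<Rightarrow> ('a \<Rightarrow> 'a \<Rightarrow> real) \<Rightarrow> ('a \<Rightarrow> 'a \<Rightarrow> 'a \<Rightarrow> 'a) \<Rightarrow> nat \<Rightarrow> bool" where
  "coarse_median_rank_le X d \<mu> n \<longleftrightarrow>
     metric_on X d \<and>
     (\<forall>a\<in>X. \<forall>b\<in>X. \<forall>c\<in>X. \<mu> a b c \<in> X) \<and>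
     (\<forall>a\<in>X. \<forall>b\<in>X. \<mu> a a b = a) \<and>
     (\<forall>a\<in>X. \<forall>b\<in>X. \<forall>c\<in>X. \<mu> a b c = \<mu> b a c \<and> \<mu> a b c = \<mu> a c b) \<and>
     (\<exists>K H0 :: real. \<exists>H :: nat \<Rightarrow> real.
        (\<forall>p. 0 \<le> H p) \<and>
        (\<forall>a\<in>X. \<forall>b\<in>X. \<forall>c\<in>X. \<forall>a'\<in>X. \<forall>b'\<in>X. \<forall>c'\<in>X.
           d (\<mu> a b c) (\<mu> a' b' c') \<le> K * (d a a' + d b b' + d c c') + H0) \<and>
        (\<forall>p. \<forall>A. A \<subseteq> X \<and> finite A \<and> 1 \<le> card A \<and> card A \<le> p \<longrightarrow>
           (\<exists>(P :: nat set) mP \<pi> lam.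
              finite P \<and> median_algebra P mP \<and> median_rank_le P mP n \<and>
              \<pi> ` A \<subseteq> P \<and> lam ` P \<subseteq> X \<and>
              (\<forall>x\<in>P. \<forall>y\<in>P. \<forall>z\<in>P. d (lam (mP x y z)) (\<mu> (lam x) (lam y) (lam z)) \<le> H p) \<and>
              (\<forall>a\<in>A. d (lam (\<pi> a)) a \<le> H p))))"

definition coarse_median_rank_eq ::
  "'a set \<Rightarrow> ('a \<Rightarrow> 'a \<Rightarrow> real) \<Rightarrow> ('a \<Rightarrow> 'a \<Rightarrow> 'a \<Rightarrow> 'a) \<Rightarrow> nat \<Rightarrow> bool" where
  "coarse_median_rank_eq X d \<mu> n \<longleftrightarrow>
     coarse_median_rank_le X d \<mu> n \<and> (\<forall>k<n. \<not> coarse_median_rank_le X d \<mu> k)"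

definition median_interval :: "'a set \<Rightarrow> ('a \<Rightarrow> 'a \<Rightarrow> 'a \<Rightarrow> 'a) \<Rightarrow> 'a \<Rightarrow> 'a \<Rightarrow> 'a set" where
  "median_interval X \<mu> a b = {\<mu> a y b | y. y \<in> X}"

end

theory Submission
  imports Defs "HOL-Analysis.Product_Vector"
begin

(* The example is the plane with the l-infinity metric and the coordinatewise median.
   It is geodesic (straight segments), and every finite set lies in the finite median
   subalgebra spanned by its coordinates, so it is a coarse median space with zero error.
   A median cube embedded in the plane takes only two values in each coordinate, so it has
   at most four points: the rank is at most 2. The rank is not at most 1: in a median
   algebra of rank 1 any two points of an interval [a, c] are comparable from a, whereas
   for the corners a, b, c, e of a large square the medians (a, b, c) = b and (a, e, c) = e
   are incomparable from a, and a coarse model of the corners would have to reproduce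
   this up to bounded error.
   Finally, the only geodesic from (0, 0) to (L, L) is the diagonal, while the interval
   between them is the whole square, whose corner (L, 0) is at distance L/2 from it. *)

section \<open>Medians on the line and in the plane\<close>

definition med :: "real \<Rightarrow> real \<Rightarrow> real \<Rightarrow> real" where
  "med x y z = max (min x y) (min (max x y) z)"

lemma med_idem [simp]: "med a a b = a"
  unfolding med_def by (simp add: min_def max_def)

lemma med_commute_12: "med a b c = med b a c"
  unfolding med_def by (simp add: min_def max_def)

lemma med_commute_23: "med a b c = med a c b"
  unfolding med_def by (simp add: min_def max_def)

lemma med_assoc: "med (med a b c) b e = med a b (med c b e)"
  unfolding med_def min_def max_def by (smt (verit))

lemma med_cases: "med a b c = a \<or> med a b c = b \<or> med a b c = c"
  unfolding med_def min_def max_def by (smt (verit))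

lemma med_lipschitz: "\<bar>med a b c - med a' b' c'\<bar> \<le> \<bar>a - a'\<bar> + \<bar>b - b'\<bar> + \<bar>c - c'\<bar>"
  unfolding med_def min_def max_def by (smt (verit))

lemma med_mutually_between:
  "a = med p a q \<Longrightarrow> b = med p b q \<Longrightarrow> p = med a b p \<Longrightarrow> q = med a b q \<Longrightarrow> a = p \<or> a = q"
  unfolding med_def min_def max_def by (smt (verit))

definition linf_dist :: "real \<times> real \<Rightarrow> real \<times> real \<Rightarrow> real" where
  "linf_dist p q = max \<bar>fst p - fst q\<bar> \<bar>snd p - snd q\<bar>"

definition plane_median :: "real \<times> real \<Rightarrow> real \<times> real \<Rightarrow> real \<times> real \<Rightarrow> real \<times> real" where
  "plane_median p q r = (med (fst p) (fst q) (fst r), med (snd p) (snd q) (snd r))"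

lemma linf_dist_commute: "linf_dist p q = linf_dist q p"
  unfolding linf_dist_def by (simp add: abs_minus_commute)

lemma linf_dist_triangle: "linf_dist p r \<le> linf_dist p q + linf_dist q r"
  unfolding linf_dist_def by (smt (verit))

lemma linf_dist_eq_0_iff: "linf_dist p q = 0 \<longleftrightarrow> p = q"
  unfolding linf_dist_def by (cases p; cases q) (auto simp: max_def)

lemma linf_dist_self [simp]: "linf_dist p p = 0"
  by (simp add: linf_dist_eq_0_iff)

lemma metric_on_linf_dist: "metric_on UNIV linf_dist"
  unfolding metric_on_def linf_dist_def
  using linf_dist_commute linf_dist_triangle linf_dist_eq_0_iff
  by (auto simp: linf_dist_def)

lemma plane_median_lipschitz:
  "linf_dist (plane_median a b c) (plane_median a' b' c')
     \<le> linf_dist a a' + linf_dist b b' + linf_dist c c'"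
  using med_lipschitz[of "fst a" "fst b" "fst c" "fst a'" "fst b'" "fst c'"]
    med_lipschitz[of "snd a" "snd b" "snd c" "snd a'" "snd b'" "snd c'"]
  unfolding plane_median_def linf_dist_def by (simp, smt (verit) max.cobounded1 max.cobounded2)

lemma plane_median_idem [simp]: "plane_median a a b = a"
  unfolding plane_median_def by simp

lemma plane_median_commute_12: "plane_median a b c = plane_median b a c"
  unfolding plane_median_def by (metis med_commute_12)

lemma plane_median_commute_23: "plane_median a b c = plane_median a c b"
  unfolding plane_median_def by (metis med_commute_23)

lemma plane_median_assoc:
  "plane_median (plane_median a b c) b e = plane_median a b (plane_median c b e)"
  unfolding plane_median_def by (simp add: med_assoc)

lemma plane_median_in_product:
  assumes "x \<in> S \<times> T" "y \<in> S \<times> T" "z \<in> S \<times> T"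
  shows "plane_median x y z \<in> S \<times> T"
  using assms med_cases[of "fst x" "fst y" "fst z"] med_cases[of "snd x" "snd y" "snd z"]
  unfolding plane_median_def by (auto simp: mem_Times_iff)

lemma median_algebra_plane_median:
  assumes "\<And>x y z. x \<in> S \<Longrightarrow> y \<in> S \<Longrightarrow> z \<in> S \<Longrightarrow> plane_median x y z \<in> S"
  shows "median_algebra S plane_median"
  unfolding median_algebra_def
  using assms plane_median_commute_12 plane_median_commute_23 plane_median_assoc by auto

section \<open>Geodesics for the l-infinity metric\<close>

definition segment_path :: "real \<times> real \<Rightarrow> real \<times> real \<Rightarrow> real \<Rightarrow> real \<times> real" where
  "segment_path a b t = a + (t / linf_dist a b) *\<^sub>R (b - a)"

lemma linf_dist_scaled: "linf_dist (a + s *\<^sub>R v) (a + t *\<^sub>R v) = \<bar>s - t\<bar> * linf_dist v 0"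
proof -
  have "\<bar>s * x - t * x\<bar> = \<bar>s - t\<bar> * \<bar>x\<bar>" for x :: real
    by (metis abs_mult left_diff_distrib)
  then show ?thesis
    unfolding linf_dist_def by (simp add: max_mult_distrib_left)
qed

lemma geodesic_path_segment: "geodesic_path UNIV linf_dist (segment_path a b) a b"
proof (cases "a = b")
  case True
  then show ?thesis
    unfolding geodesic_path_def segment_path_def by simp
next
  case False
  then have D: "linf_dist a b > 0"
    using linf_dist_eq_0_iff[of a b] by (simp add: linf_dist_def)
  have "linf_dist (b - a) 0 = linf_dist a b"
    unfolding linf_dist_def by (simp add: abs_minus_commute)
  then have "linf_dist (segment_path a b s) (segment_path a b t) = \<bar>s - t\<bar>" for s t
    unfolding segment_path_def linf_dist_scaled using D by (simp add: abs_divide field_simps)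
  moreover have "segment_path a b (linf_dist a b) = b"
    unfolding segment_path_def using D by simp
  ultimately show ?thesis
    unfolding geodesic_path_def segment_path_def by simp
qed

lemma geodesic_space_plane: "geodesic_space UNIV linf_dist"
  unfolding geodesic_space_def using metric_on_linf_dist geodesic_path_segment by blast

lemma geodesic_path_diagonal:
  assumes g: "geodesic_path UNIV linf_dist \<gamma> (0, 0) (L, L)" and t: "t \<in> {0..L}"
  shows "\<gamma> t = (t, t)"
proof -
  have "linf_dist (0, 0) (L, L) = L"
    unfolding linf_dist_def using t by simp
  then have ends: "\<gamma> 0 = (0, 0)" "\<gamma> L = (L, L)"
    and iso: "\<And>s t. s \<in> {0..L} \<Longrightarrow> t \<in> {0..L} \<Longrightarrow> linf_dist (\<gamma> s) (\<gamma> t) = \<bar>s - t\<bar>"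
    using g unfolding geodesic_path_def by auto
  have "linf_dist (0, 0) (\<gamma> t) = t" "linf_dist (\<gamma> t) (L, L) = L - t"
    using iso[of 0 t] iso[of t L] ends t by auto
  then show ?thesis
    unfolding linf_dist_def by (cases "\<gamma> t") (simp, smt (verit) max.cobounded1 max.cobounded2)
qed

section \<open>Median algebras\<close>

context
  fixes P and m :: "'b \<Rightarrow> 'b \<Rightarrow> 'b \<Rightarrow> 'b"
  assumes ma: "median_algebra P m"
begin

lemma median_closed: "a \<in> P \<Longrightarrow> b \<in> P \<Longrightarrow> c \<in> P \<Longrightarrow> m a b c \<in> P"
  and median_idem: "a \<in> P \<Longrightarrow> b \<in> P \<Longrightarrow> m a a b = a"
  and median_commute_12: "a \<in> P \<Longrightarrow> b \<in> P \<Longrightarrow> c \<in> P \<Longrightarrow> m a b c = m b a c"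
  and median_commute_23: "a \<in> P \<Longrightarrow> b \<in> P \<Longrightarrow> c \<in> P \<Longrightarrow> m a b c = m a c b"
  and median_assoc: "a \<in> P \<Longrightarrow> b \<in> P \<Longrightarrow> c \<in> P \<Longrightarrow> e \<in> P \<Longrightarrow>
    m (m a b c) b e = m a b (m c b e)"
  using ma unfolding median_algebra_def by blast+

lemma median_idem_13: "a \<in> P \<Longrightarrow> b \<in> P \<Longrightarrow> m a b a = a"
  and median_idem_23: "a \<in> P \<Longrightarrow> b \<in> P \<Longrightarrow> m b a a = a"
  by (metis median_idem median_commute_12 median_commute_23)+

lemma median_permute:
  assumes "x \<in> P" "y \<in> P" "t \<in> P"
  shows "m y x t = m x y t" "m x t y = m x y t" "m y t x = m x y t"
    "m t x y = m x y t" "m t y x = m x y t"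
  using assms by (metis median_commute_12 median_commute_23)+

lemma median_absorb: "x \<in> P \<Longrightarrow> y \<in> P \<Longrightarrow> z \<in> P \<Longrightarrow> m (m x y z) y z = m x y z"
  by (metis median_assoc median_idem_13)

lemma median_in_interval: "a \<in> P \<Longrightarrow> b \<in> P \<Longrightarrow> c \<in> P \<Longrightarrow> m a (m a b c) c = m a b c"
  by (metis median_absorb median_closed median_commute_12)

end

lemma contains_cube_2_of_square:
  assumes ma: "median_algebra P m" and P: "w \<in> P" "u \<in> P" "z \<in> P" "v \<in> P"
    and "distinct [w, u, z, v]"
    and wuv: "m w u v = w" and zuv: "m z u v = z" and wuz: "m w u z = u" and wvz: "m w v z = v"
  shows "contains_cube P m 2"
proof -
  define corner where "corner b0 b1 = (if b0 then (if b1 then z else u) else (if b1 then v else w))"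
    for b0 b1
  define f where "f x = corner (x (0::nat)) (x 1)" for x :: "nat \<Rightarrow> bool"
  have corner_hom: "corner (b0 \<and> c0 \<or> c0 \<and> e0 \<or> b0 \<and> e0) (b1 \<and> c1 \<or> c1 \<and> e1 \<or> b1 \<and> e1)
      = m (corner b0 b1) (corner c0 c1) (corner e0 e1)" for b0 b1 c0 c1 e0 e1
    by (cases b0; cases b1; cases c0; cases c1; cases e0; cases e1)
      (simp_all add: corner_def wuv zuv wuz wvz P median_permute[OF ma P(1,2,4)]
        median_permute[OF ma P(3,2,4)] median_permute[OF ma P(1,2,3)] median_permute[OF ma P(1,4,3)]
        median_idem[OF ma] median_idem_13[OF ma] median_idem_23[OF ma])
  have "x = y" if "x \<in> cube 2" "y \<in> cube 2" "f x = f y" for x y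
  proof -
    have x01: "x 0 = y 0 \<and> x 1 = y 1"
      using \<open>f x = f y\<close> \<open>distinct [w, u, z, v]\<close> unfolding f_def corner_def
      by (cases "x 0"; cases "x 1"; cases "y 0"; cases "y 1") auto
    show "x = y"
    proof
      fix i
      show "x i = y i"
        using that(1,2) x01 by (cases "i \<le> 1") (auto simp: cube_def le_Suc_eq)
    qed
  qed
  then have "inj_on f (cube 2)"
    by (rule inj_onI)
  moreover have "f ` cube 2 \<subseteq> P"
    using P unfolding f_def corner_def by auto
  moreover have "f (majority x y t) = m (f x) (f y) (f t)" for x y t
    unfolding f_def majority_def using corner_hom by simp
  ultimately show ?thesis
    unfolding contains_cube_def by blast
qed

lemma rank_le_1_interval_linear:
  assumes ma: "median_algebra P m" and rank: "median_rank_le P m 1"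
    and P: "a \<in> P" "c \<in> P" "u \<in> P" "v \<in> P"
    and u: "m a u c = u" and v: "m a v c = v"
  shows "m a u v = u \<or> m a u v = v"
proof (rule ccontr)
  assume not_end: "\<not> (m a u v = u \<or> m a u v = v)"
  \<comment> \<open>Then w, u, z, v are the corners of a square.\<close>
  define w where "w = m a u v"
  define z where "z = m c u v"
  have wz: "w \<in> P" "z \<in> P"
    unfolding w_def z_def using median_closed[OF ma] P by auto
  have wuv: "m w u v = w" and zuv: "m z u v = z"
    unfolding w_def z_def using median_absorb[OF ma] P by auto
  have wuz: "m w u z = u"
  proof -
    have "m w u z = m a u (m v u z)"
      unfolding w_def using median_assoc[OF ma] P wz by simp
    also have "m v u z = z"
      using zuv median_permute(5)[OF ma wz(2) P(3,4)] by simp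
    also have "m a u z = m (m a u c) u v"
      unfolding z_def using median_assoc[OF ma] P by simp
    finally show ?thesis
      using u median_idem[OF ma] P by simp
  qed
  have wvz: "m w v z = v"
  proof -
    have "w = m a v u"
      unfolding w_def using median_commute_23[OF ma] P by simp
    then have "m w v z = m a v (m u v z)"
      using median_assoc[OF ma] P wz by simp
    also have "m u v z = z"
      using zuv median_permute(3)[OF ma wz(2) P(3,4)] by simp
    also have "m a v z = m (m a v c) v u"
      using median_assoc[OF ma, of a v c u] median_commute_23[OF ma, of c u v] P
      unfolding z_def by simp
    finally show ?thesis
      using v median_idem[OF ma] P by simp
  qed
  have "w \<noteq> u" "w \<noteq> v"
    using not_end unfolding w_def by auto
  moreover have "u \<noteq> v"
    using not_end median_idem_23[OF ma P(3,1)] by auto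
  moreover have "z \<noteq> w"
    using wuz \<open>w \<noteq> u\<close> median_idem_13[OF ma wz(1) P(3)] by auto
  moreover have "z \<noteq> u"
    using wvz wuv \<open>w \<noteq> v\<close> median_commute_23[OF ma wz(1) P(3,4)] by auto
  moreover have "z \<noteq> v"
    using wuz wuv \<open>w \<noteq> u\<close> by auto
  ultimately have "distinct [w, u, z, v]"
    by auto
  then have "contains_cube P m 2"
    using contains_cube_2_of_square[OF ma wz(1) P(3) wz(2) P(4)] wuv zuv wuz wvz by blast
  then show False
    using rank unfolding median_rank_le_def by fastforce
qed

section \<open>The plane has rank at most 2\<close>

lemma cube_hom_med_two_valued:
  fixes h :: "(nat \<Rightarrow> bool) \<Rightarrow> real"
  assumes hom: "\<And>x y t. x \<in> cube k \<Longrightarrow> y \<in> cube k \<Longrightarrow> t \<in> cube k \<Longrightarrow>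
      h (majority x y t) = med (h x) (h y) (h t)"
    and x: "x \<in> cube k"
  shows "h x = h (\<lambda>_. False) \<or> h x = h (\<lambda>i. i < k)"
proof -
  let ?O = "\<lambda>_::nat. False" and ?I = "\<lambda>i. i < k" and ?c = "\<lambda>i. i < k \<and> \<not> x i"
  have cube: "?O \<in> cube k" "?I \<in> cube k" "?c \<in> cube k"
    unfolding cube_def by auto
  have "\<not> x i" if "k \<le> i" for i
    using x that unfolding cube_def by auto
  then have "majority ?O x ?I = x" "majority x ?c ?I = ?I"
    unfolding majority_def by (auto simp: not_le[symmetric])
  moreover have "majority ?O ?c ?I = ?c" "majority x ?c ?O = ?O"
    unfolding majority_def by auto
  ultimately show ?thesis
    using hom[OF cube(1) x cube(2)] hom[OF cube(1) cube(3) cube(2)]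
      hom[OF x cube(3) cube(1)] hom[OF x cube(3) cube(2)]
    by (intro med_mutually_between) simp_all
qed

lemma cube_has_five_points:
  assumes "3 \<le> k"
  obtains F where "F \<subseteq> cube k" "card F = 5"
proof
  let ?F = "{(\<lambda>_::nat. False), \<lambda>i. i = 0, \<lambda>i. i = 1, \<lambda>i. i = 2, \<lambda>i. i = 0 \<or> i = 1}"
  show "?F \<subseteq> cube k"
    unfolding cube_def using assms by simp
  have "distinct [(\<lambda>_::nat. False), \<lambda>i. i = 0, \<lambda>i. i = 1, \<lambda>i. i = 2, \<lambda>i. i = 0 \<or> i = 1]"
    by (simp add: fun_eq_iff) presburger
  from distinct_card[OF this] show "card ?F = 5"
    by simp
qed

lemma plane_contains_no_cube_3:
  assumes "contains_cube S plane_median k"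
  shows "k \<le> 2"
proof (rule ccontr)
  assume "\<not> k \<le> 2"
  then have "3 \<le> k"
    by simp
  obtain q where inj: "inj_on q (cube k)" and
    hom: "\<And>x y t. x \<in> cube k \<Longrightarrow> y \<in> cube k \<Longrightarrow> t \<in> cube k \<Longrightarrow>
      q (majority x y t) = plane_median (q x) (q y) (q t)"
    using assms unfolding contains_cube_def by metis
  let ?O = "\<lambda>_::nat. False" and ?I = "\<lambda>i. i < k"
  define Q where "Q = {fst (q ?O), fst (q ?I)} \<times> {snd (q ?O), snd (q ?I)}"
  obtain F where F: "F \<subseteq> cube k" and "card F = 5"
    using cube_has_five_points[OF \<open>3 \<le> k\<close>] .
  have "q x \<in> Q" if "x \<in> cube k" for x
  proof -
    have "fst (q x) \<in> {fst (q ?O), fst (q ?I)}" "snd (q x) \<in> {snd (q ?O), snd (q ?I)}"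
      using cube_hom_med_two_valued[of k "fst \<circ> q", OF _ that]
        cube_hom_med_two_valued[of k "snd \<circ> q", OF _ that] hom
      unfolding plane_median_def by simp_all
    then show ?thesis
      unfolding Q_def by (metis mem_Times_iff)
  qed
  then have "q ` F \<subseteq> Q"
    using F by blast
  have "5 = card F"
    using \<open>card F = 5\<close> ..
  also have "\<dots> = card (q ` F)"
    using card_image[OF inj_on_subset[OF inj F]] by simp
  also have "\<dots> \<le> card Q"
    using \<open>q ` F \<subseteq> Q\<close> by (rule card_mono[rotated]) (simp add: Q_def)
  also have "\<dots> \<le> 4"
    unfolding Q_def card_cartesian_product
    by (rule order.trans[OF mult_le_mono[OF card_insert_le_m1 card_insert_le_m1]]) auto
  finally show False
    by simp
qed

lemma median_rank_le_2_plane: "median_rank_le S plane_median 2"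
  unfolding median_rank_le_def using plane_contains_no_cube_3 by blast

text \<open>The definition of coarse median spaces asks for finite median algebras carried by sets
  of natural numbers; a median algebra is copied onto such a set along a bijection.\<close>

definition transport_median ::
  "('n \<Rightarrow> 'a) \<Rightarrow> 'n set \<Rightarrow> ('a \<Rightarrow> 'a \<Rightarrow> 'a \<Rightarrow> 'a) \<Rightarrow> 'n \<Rightarrow> 'n \<Rightarrow> 'n \<Rightarrow> 'n" where
  "transport_median g P m x y z = the_inv_into P g (m (g x) (g y) (g z))"

context
  fixes g :: "'n \<Rightarrow> 'a" and P G m
  assumes bij: "bij_betw g P G" and ma: "median_algebra G m"
begin

lemma transport_median_in: "x \<in> P \<Longrightarrow> y \<in> P \<Longrightarrow> z \<in> P \<Longrightarrow> transport_median g P m x y z \<in> P"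
  unfolding transport_median_def
  using bij median_closed[OF ma] by (metis bij_betwE bij_betw_the_inv_into)

lemma transport_median_hom:
  "x \<in> P \<Longrightarrow> y \<in> P \<Longrightarrow> z \<in> P \<Longrightarrow> g (transport_median g P m x y z) = m (g x) (g y) (g z)"
  unfolding transport_median_def
  using bij median_closed[OF ma] by (metis bij_betwE bij_betw_def f_the_inv_into_f)

lemma median_algebra_transport: "median_algebra P (transport_median g P m)"
proof -
  let ?m = "transport_median g P m"
  have gP: "x \<in> P \<Longrightarrow> g x \<in> G" for x
    using bij bij_betwE by blast
  note hom = transport_median_hom and closed = transport_median_in
  show ?thesis
    unfolding median_algebra_def
  proof (intro conjI ballI)
    fix a b c e
    assume P: "a \<in> P" "b \<in> P" "c \<in> P" "e \<in> P"
    show "?m a b c \<in> P"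
      using P closed by blast
    show "?m a b c = ?m b a c" "?m a b c = ?m a c b"
      using P median_commute_12[OF ma] median_commute_23[OF ma] gP
      unfolding transport_median_def by metis+
    show "?m (?m a b c) b e = ?m a b (?m c b e)"
      using P closed hom median_assoc[OF ma] gP
      unfolding transport_median_def by metis
  next
    fix a b
    assume "a \<in> P" "b \<in> P"
    then show "?m a a b = a"
      using median_idem[OF ma] gP bij the_inv_into_f_f
      unfolding transport_median_def bij_betw_def by metis
  qed
qed

lemma median_rank_le_transport:
  assumes "median_rank_le G m n"
  shows "median_rank_le P (transport_median g P m) n"
  unfolding median_rank_le_def
proof (intro allI impI)
  fix k
  assume "contains_cube P (transport_median g P m) k"
  then obtain f where f: "inj_on f (cube k)" "f ` cube k \<subseteq> P"
    and hom: "\<And>x y z. x \<in> cube k \<Longrightarrow> y \<in> cube k \<Longrightarrow> z \<in> cube k \<Longrightarrow>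
      f (majority x y z) = transport_median g P m (f x) (f y) (f z)"
    unfolding contains_cube_def by metis
  have "inj_on (g \<circ> f) (cube k)"
    using f bij by (metis bij_betw_def comp_inj_on inj_on_subset)
  moreover have "(g \<circ> f) ` cube k \<subseteq> G"
    using f(2) bij by (auto dest: bij_betwE)
  moreover have "(g \<circ> f) (majority x y z) = m ((g \<circ> f) x) ((g \<circ> f) y) ((g \<circ> f) z)"
    if "x \<in> cube k" "y \<in> cube k" "z \<in> cube k" for x y z
    using hom[OF that] transport_median_hom f(2) that by (simp add: image_subset_iff)
  ultimately have "contains_cube G m k"
    unfolding contains_cube_def by blast
  then show "k \<le> n"
    using assms unfolding median_rank_le_def by blast
qed

end

lemma plane_finite_median_model:
  assumes "finite A"
  obtains P :: "nat set" and mP \<pi> lam where "finite P" "median_algebra P mP"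
    "median_rank_le P mP 2" "\<pi> ` A \<subseteq> P"
    "\<And>x y z. x \<in> P \<Longrightarrow> y \<in> P \<Longrightarrow> z \<in> P \<Longrightarrow>
      lam (mP x y z) = plane_median (lam x) (lam y) (lam z)"
    "\<And>a. a \<in> A \<Longrightarrow> lam (\<pi> a) = a"
proof -
  define G where "G = fst ` A \<times> snd ` A"
  have "finite G" and "A \<subseteq> G"
    unfolding G_def using assms by force+
  have ma: "median_algebra G plane_median"
    unfolding G_def by (intro median_algebra_plane_median plane_median_in_product)
  obtain g where bij: "bij_betw g {0..<card G} G"
    using ex_bij_betw_nat_finite[OF \<open>finite G\<close>] by blast
  then have inj: "inj_on g {0..<card G}" and img: "g ` {0..<card G} = G"
    unfolding bij_betw_def by auto
  show ?thesis
  proof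
    show "median_algebra {0..<card G} (transport_median g {0..<card G} plane_median)"
      using bij ma by (rule median_algebra_transport)
    show "median_rank_le {0..<card G} (transport_median g {0..<card G} plane_median) 2"
      using bij ma median_rank_le_2_plane by (rule median_rank_le_transport)
    show "the_inv_into {0..<card G} g ` A \<subseteq> {0..<card G}"
      using the_inv_into_into[OF inj] img \<open>A \<subseteq> G\<close> by blast
    show "g (the_inv_into {0..<card G} g a) = a" if "a \<in> A" for a
      using f_the_inv_into_f[OF inj] img \<open>A \<subseteq> G\<close> that by blast
  qed (use transport_median_hom[OF bij ma] in auto)
qed

lemma coarse_median_rank_le_2_plane: "coarse_median_rank_le UNIV linf_dist plane_median 2"
proof -
  have "\<exists>(P :: nat set) mP \<pi> lam. finite P \<and> median_algebra P mP \<and> median_rank_le P mP 2 \<and>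
      \<pi> ` A \<subseteq> P \<and> lam ` P \<subseteq> UNIV \<and>
      (\<forall>x\<in>P. \<forall>y\<in>P. \<forall>z\<in>P. linf_dist (lam (mP x y z)) (plane_median (lam x) (lam y) (lam z)) \<le> 0) \<and>
      (\<forall>a\<in>A. linf_dist (lam (\<pi> a)) a \<le> 0)" if "finite A" for A
  proof -
    obtain P :: "nat set" and mP \<pi> lam where M: "finite P" "median_algebra P mP"
      "median_rank_le P mP 2" "\<pi> ` A \<subseteq> P"
      "\<And>x y z. x \<in> P \<Longrightarrow> y \<in> P \<Longrightarrow> z \<in> P \<Longrightarrow>
        lam (mP x y z) = plane_median (lam x) (lam y) (lam z)"
      "\<And>a. a \<in> A \<Longrightarrow> lam (\<pi> a) = a"
      using plane_finite_median_model[OF \<open>finite A\<close>] by blast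
    then show ?thesis
      by (intro exI[of _ P] exI[of _ mP] exI[of _ \<pi>] exI[of _ lam]) simp
  qed
  then show ?thesis
    unfolding coarse_median_rank_le_def
    using metric_on_linf_dist plane_median_commute_12 plane_median_commute_23 plane_median_lipschitz
    by (intro conjI exI[of _ "1::real"] exI[of _ "0::real"] exI[of _ "\<lambda>_::nat. 0::real"]) simp_all
qed

section \<open>The plane does not have rank at most 1\<close>

lemma coarse_median_rank_le_approximation:
  assumes "coarse_median_rank_le X d \<mu> n"
  obtains H :: "nat \<Rightarrow> real" where "\<And>p. 0 \<le> H p" "\<And>A. A \<subseteq> X \<Longrightarrow> finite A \<Longrightarrow> A \<noteq> {} \<Longrightarrow>
    \<exists>(P :: nat set) mP \<pi> lam. median_algebra P mP \<and> median_rank_le P mP n \<and> \<pi> ` A \<subseteq> P \<and>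
      (\<forall>x\<in>P. \<forall>y\<in>P. \<forall>z\<in>P. d (lam (mP x y z)) (\<mu> (lam x) (lam y) (lam z)) \<le> H (card A)) \<and>
      (\<forall>a\<in>A. d (lam (\<pi> a)) a \<le> H (card A))"
proof -
  obtain H :: "nat \<Rightarrow> real" where "\<forall>p. 0 \<le> H p" and H: "\<forall>p A. A \<subseteq> X \<and> finite A \<and> 1 \<le> card A \<and> card A \<le> p \<longrightarrow>
      (\<exists>(P :: nat set) mP \<pi> lam. finite P \<and> median_algebra P mP \<and> median_rank_le P mP n \<and>
        \<pi> ` A \<subseteq> P \<and> lam ` P \<subseteq> X \<and>
        (\<forall>x\<in>P. \<forall>y\<in>P. \<forall>z\<in>P. d (lam (mP x y z)) (\<mu> (lam x) (lam y) (lam z)) \<le> H p) \<and>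
        (\<forall>a\<in>A. d (lam (\<pi> a)) a \<le> H p))"
    using assms unfolding coarse_median_rank_le_def by (elim conjE exE) (rule that; assumption)
  show ?thesis
  proof
    show "0 \<le> H p" for p
      using \<open>\<forall>p. 0 \<le> H p\<close> ..
  next
    fix A assume "A \<subseteq> X" "finite A" "A \<noteq> {}"
    then have "1 \<le> card A"
      by (simp add: Suc_leI card_gt_0_iff)
    then have "\<exists>(P :: nat set) mP \<pi> lam. finite P \<and> median_algebra P mP \<and> median_rank_le P mP n \<and>
        \<pi> ` A \<subseteq> P \<and> lam ` P \<subseteq> X \<and>
        (\<forall>x\<in>P. \<forall>y\<in>P. \<forall>z\<in>P. d (lam (mP x y z)) (\<mu> (lam x) (lam y) (lam z)) \<le> H (card A)) \<and>
        (\<forall>a\<in>A. d (lam (\<pi> a)) a \<le> H (card A))"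
      using H \<open>A \<subseteq> X\<close> \<open>finite A\<close> by simp
    then show "\<exists>(P :: nat set) mP \<pi> lam. median_algebra P mP \<and> median_rank_le P mP n \<and> \<pi> ` A \<subseteq> P \<and>
      (\<forall>x\<in>P. \<forall>y\<in>P. \<forall>z\<in>P. d (lam (mP x y z)) (\<mu> (lam x) (lam y) (lam z)) \<le> H (card A)) \<and>
      (\<forall>a\<in>A. d (lam (\<pi> a)) a \<le> H (card A))"
      by (elim exE conjE, intro exI conjI) assumption+
  qed
qed

lemma linf_dist_plane_median_shift:
  "linf_dist s (plane_median p q r)
     \<le> linf_dist s (plane_median x y z) + linf_dist x p + linf_dist y q + linf_dist z r"
  using linf_dist_triangle[of s "plane_median p q r" "plane_median x y z"]
    plane_median_lipschitz[of x y z p q r] by linarith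

lemma not_coarse_median_rank_le_1_plane:
  assumes "k \<le> 1"
  shows "\<not> coarse_median_rank_le UNIV linf_dist plane_median k"
proof
  assume "coarse_median_rank_le UNIV linf_dist plane_median k"
  then obtain H :: "nat \<Rightarrow> real" where H: "\<And>p. 0 \<le> H p" and approx: "\<And>A. A \<subseteq> UNIV \<Longrightarrow> finite A \<Longrightarrow> A \<noteq> {} \<Longrightarrow>
    \<exists>(P :: nat set) mP \<pi> lam. median_algebra P mP \<and> median_rank_le P mP k \<and> \<pi> ` A \<subseteq> P \<and>
      (\<forall>x\<in>P. \<forall>y\<in>P. \<forall>z\<in>P.
        linf_dist (lam (mP x y z)) (plane_median (lam x) (lam y) (lam z)) \<le> H (card A)) \<and>
      (\<forall>a\<in>A. linf_dist (lam (\<pi> a)) a \<le> H (card A))"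
    by (rule coarse_median_rank_le_approximation) (rule that)
  define h where "h = H 4"
  \<comment> \<open>The side of the square exceeds the accumulated error 14 h of the approximation.\<close>
  define L where "L = 14 * h + 1"
  have "0 < L"
    using H unfolding h_def L_def by (auto intro: add_nonneg_pos)
  define a b c e :: "real \<times> real" where "a = (0, 0)" "b = (L, 0)" "c = (L, L)" "e = (0, L)"
  have "card {a, b, c, e} = 4"
    using \<open>0 < L\<close> unfolding a_b_c_e_def by (simp add: card_insert_if)
  then obtain P :: "nat set" and mP \<pi> lam where ma: "median_algebra P mP"
    and rank: "median_rank_le P mP k" and \<pi>: "\<pi> ` {a, b, c, e} \<subseteq> P"
    and hom: "\<forall>x\<in>P. \<forall>y\<in>P. \<forall>z\<in>P.
      linf_dist (lam (mP x y z)) (plane_median (lam x) (lam y) (lam z)) \<le> h"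
    and near: "\<forall>p\<in>{a, b, c, e}. linf_dist (lam (\<pi> p)) p \<le> h"
    using approx[of "{a, b, c, e}"] unfolding h_def by auto
  have P: "\<pi> a \<in> P" "\<pi> b \<in> P" "\<pi> c \<in> P" "\<pi> e \<in> P"
    using \<pi> by auto
  define u v where "u = mP (\<pi> a) (\<pi> b) (\<pi> c)" "v = mP (\<pi> a) (\<pi> e) (\<pi> c)"
  have uv: "u \<in> P" "v \<in> P"
    unfolding u_v_def using median_closed[OF ma] P by auto
  have medians: "plane_median a b c = b" "plane_median a e c = e" "plane_median a b e = a"
    unfolding a_b_c_e_def plane_median_def med_def using \<open>0 < L\<close> by auto
  have u_near: "linf_dist (lam u) b \<le> 4 * h"
    using linf_dist_plane_median_shift[of "lam u" a b c "lam (\<pi> a)" "lam (\<pi> b)" "lam (\<pi> c)"]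
      hom[rule_format, OF P(1,2,3)] near
    unfolding u_v_def medians by simp
  have v_near: "linf_dist (lam v) e \<le> 4 * h"
    using linf_dist_plane_median_shift[of "lam v" a e c "lam (\<pi> a)" "lam (\<pi> e)" "lam (\<pi> c)"]
      hom[rule_format, OF P(1,4,3)] near
    unfolding u_v_def medians by simp
  have w_near: "linf_dist (lam (mP (\<pi> a) u v)) a \<le> 10 * h"
    using linf_dist_plane_median_shift[of "lam (mP (\<pi> a) u v)" a b e "lam (\<pi> a)" "lam u" "lam v"]
      hom[rule_format, OF P(1) uv] near u_near v_near
    unfolding medians by simp
  have "median_rank_le P mP 1"
    using rank \<open>k \<le> 1\<close> unfolding median_rank_le_def by fastforce
  then have "mP (\<pi> a) u v = u \<or> mP (\<pi> a) u v = v"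
    using rank_le_1_interval_linear[OF ma _ P(1,3) uv] median_in_interval[OF ma] P
    unfolding u_v_def by blast
  moreover have "linf_dist a b = L" "linf_dist a e = L"
    unfolding a_b_c_e_def linf_dist_def using \<open>0 < L\<close> by auto
  ultimately show False
    using w_near u_near v_near linf_dist_triangle[of a b "lam u"] linf_dist_triangle[of a e "lam v"]
      linf_dist_commute[of a] unfolding L_def by auto
qed

lemma diagonal_far_from_interval:
  assumes "0 \<le> C" and L: "L = 2 * C + 2"
    and g: "geodesic_path UNIV linf_dist \<gamma> (0, 0) (L, L)"
  shows "\<not> hausdorff_le linf_dist (\<gamma> ` {0..L}) (median_interval UNIV plane_median (0, 0) (L, L)) C"
proof
  assume "hausdorff_le linf_dist (\<gamma> ` {0..L}) (median_interval UNIV plane_median (0, 0) (L, L)) C"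
  moreover have "plane_median (0, 0) (L, 0) (L, L) = (L, 0)"
    unfolding plane_median_def med_def L using assms by simp
  then have "(L, 0) \<in> median_interval UNIV plane_median (0, 0) (L, L)"
    unfolding median_interval_def by (intro CollectI exI[of _ "(L, 0)"]) simp
  ultimately obtain t where "t \<in> {0..L}" "linf_dist (\<gamma> t) (L, 0) < C + 1"
    unfolding hausdorff_le_def by (metis imageE zero_less_one)
  then show False
    using geodesic_path_diagonal[OF g] unfolding linf_dist_def L by auto
qed

theorem theorem5p1:
  shows "\<exists>(X :: (real \<times> real) set) d \<mu>.
     geodesic_space X d \<and> coarse_median_rank_eq X d \<mu> 2 \<and>
     (\<forall>C\<ge>0. \<exists>a\<in>X. \<exists>b\<in>X. \<forall>\<gamma>. geodesic_path X d \<gamma> a b \<longrightarrow>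
        \<not> hausdorff_le d (\<gamma> ` {0..d a b}) (median_interval X \<mu> a b) C)"
proof (intro exI[of _ UNIV] exI[of _ linf_dist] exI[of _ plane_median] conjI allI impI)
  show "geodesic_space UNIV linf_dist"
    by (rule geodesic_space_plane)
  show "coarse_median_rank_eq UNIV linf_dist plane_median 2"
    unfolding coarse_median_rank_eq_def
    using coarse_median_rank_le_2_plane not_coarse_median_rank_le_1_plane by simp
  fix C :: real
  assume "0 \<le> C"
  define L where "L = 2 * C + 2"
  have "linf_dist (0, 0) (L, L) = L"
    unfolding linf_dist_def L_def using \<open>0 \<le> C\<close> by simp
  then show "\<exists>a\<in>UNIV. \<exists>b\<in>UNIV. \<forall>\<gamma>. geodesic_path UNIV linf_dist \<gamma> a b \<longrightarrow>
      \<not> hausdorff_le linf_dist (\<gamma> ` {0..linf_dist a b}) (median_interval UNIV plane_median a b) C"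
    using diagonal_far_from_interval[OF \<open>0 \<le> C\<close> L_def]
    by (intro bexI[where x = "(0, 0)"] bexI[where x = "(L, L)"]) auto
qed

end
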